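(* There exist absolute constants $C>0$ and $n_0$ such that for all $n\ge n_0$ and all integers $1\le k\le n/\log n$ with $nk$ even, every random graph $\mathcal G$ on vertex set $[n]$ whose law is supported on the set of $k$-regular simple graphs satisfies $$\mathcal B(\mathcal G)\le C\,kn\log(n/k).$$
   Context: A random graph $\mathcal G$ on $[n]$ is identified with the random vector of edge indicators $(e^{ij})_{1\le i<j\le n}\in\{0,1\}^{\binom n2}$. For a random vector $x=(x^1,\dots,x^m)$ on a finite product set, the dual total correlation is $\mathcal B(x)=\mathcal H(x)-\sum_{i=1}^m\mathcal H(x^i\mid x^{-i})$, with $\mathcal H$ Shannon entropy and $x^{-i}$ the vector with coordinate $i$ removed. *)

theory Defs
  imports "HOL-Probability.Probability_Mass_Function"
begin

definition entropy_pmf :: "'a pmf \<Rightarrow> real" where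
  "entropy_pmf p = - (\<Sum>x\<in>set_pmf p. pmf p x * ln (pmf p x))"

definition cond_entropy_pmf :: "'w pmf \<Rightarrow> ('w \<Rightarrow> 'a) \<Rightarrow> ('w \<Rightarrow> 'b) \<Rightarrow> real" where
  "cond_entropy_pmf p f g =
     (let J = map_pmf (\<lambda>w. (f w, g w)) p; M = map_pmf g p in
      - (\<Sum>xy\<in>set_pmf J. pmf J xy * ln (pmf J xy / pmf M (snd xy))))"

text \<open>A graph on [n] is identified with its edge set E (a subset of these pairs);
  the coordinate e^{ij} is the indicator of (i,j) in E.\<close>
definition vertex_pairs :: "nat \<Rightarrow> (nat \<times> nat) set" where
  "vertex_pairs n = {(i, j). 1 \<le> i \<and> i < j \<and> j \<le> n}"

definition adj :: "(nat \<times> nat) set \<Rightarrow> nat \<Rightarrow> nat \<Rightarrow> bool" where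
  "adj E u v \<longleftrightarrow> (u, v) \<in> E \<or> (v, u) \<in> E"

definition degree :: "nat \<Rightarrow> (nat \<times> nat) set \<Rightarrow> nat \<Rightarrow> nat" where
  "degree n E v = card {u \<in> {1..n}. adj E u v}"

definition regular_graphs :: "nat \<Rightarrow> nat \<Rightarrow> (nat \<times> nat) set set" where
  "regular_graphs n k = {E. E \<subseteq> vertex_pairs n \<and> (\<forall>v\<in>{1..n}. degree n E v = k)}"

text \<open>Dual total correlation of the edge-indicator vector of a random graph on [n]
  with law p: H(x) - sum_e H(x^e | x^{-e}); x^{-e} is represented by E - {e}
  (the restriction of the indicator vector to the other coordinates).\<close>
definition dual_total_corr :: "nat \<Rightarrow> (nat \<times> nat) set pmf \<Rightarrow> real" where
  "dual_total_corr n p =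
     entropy_pmf (map_pmf (\<lambda>E. \<lambda>e\<in>vertex_pairs n. e \<in> E) p)
     - (\<Sum>e\<in>vertex_pairs n.
          cond_entropy_pmf p (\<lambda>E. e \<in> E) (\<lambda>E. \<lambda>e'\<in>vertex_pairs n - {e}. e' \<in> E))"

end

theory Submission
  imports Defs
begin

text \<open>Conditional entropies are nonnegative, so the dual total correlation is at most the
  entropy of the graph, which in turn is at most the logarithm of the number of
  \<open>k\<close>-regular graphs. A \<open>k\<close>-regular graph is determined by the \<open>n\<close> neighbourhoods of its
  vertices, each a \<open>k\<close>-subset of \<open>[n]\<close>, so there are at most
  \<open>(n choose k)^n \<le> (e n / k)^(k n)\<close> of them. For \<open>k \<le> n / ln n\<close> and \<open>n\<close> large,
  \<open>n / k \<ge> ln n \<ge> e\<close>, hence \<open>1 + ln (n / k) \<le> 2 ln (n / k)\<close>.\<close>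

lemma entropy_pmf_le_ln_card:
  assumes "finite (set_pmf q)"
  shows "entropy_pmf q \<le> ln (card (set_pmf q))"
proof -
  define N where "N = real (card (set_pmf q))"
  have N_pos: "N > 0"
    using assms set_pmf_not_empty[of q] unfolding N_def by (simp add: card_gt_0_iff)
  have sum_1: "(\<Sum>x\<in>set_pmf q. pmf q x) = 1" using sum_pmf_eq_1[OF assms] by simp
  have "entropy_pmf q - ln N
      = (\<Sum>x\<in>set_pmf q. - (pmf q x * ln (pmf q x)) - pmf q x * ln N)"
    unfolding entropy_pmf_def using sum_1
    by (simp add: sum_subtractf sum_negf flip: sum_distrib_right)
  also have "\<dots> = (\<Sum>x\<in>set_pmf q. pmf q x * ln (1 / (pmf q x * N)))"
    using N_pos by (intro sum.cong) (simp_all add: pmf_positive ln_div ln_mult algebra_simps)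
  also have "\<dots> \<le> (\<Sum>x\<in>set_pmf q. pmf q x * (1 / (pmf q x * N) - 1))"
    using N_pos by (intro sum_mono mult_left_mono ln_le_minus_one) (simp_all add: pmf_positive)
  also have "\<dots> = (\<Sum>x\<in>set_pmf q. 1 / N - pmf q x)"
    using N_pos by (intro sum.cong) (simp_all add: set_pmf_eq' field_simps)
  also have "\<dots> = 0" using sum_1 N_pos unfolding N_def by (simp add: sum_subtractf)
  finally show ?thesis unfolding N_def by simp
qed

lemma cond_entropy_pmf_nonneg: "cond_entropy_pmf p f g \<ge> 0"
proof -
  define J where "J = map_pmf (\<lambda>w. (f w, g w)) p"
  define M where "M = map_pmf g p"
  have M_eq: "M = map_pmf snd J" unfolding J_def M_def by (simp add: pmf.map_comp o_def)
  have "pmf J xy * ln (pmf J xy / pmf M (snd xy)) \<le> 0" if "xy \<in> set_pmf J" for xy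
  proof -
    have J_pos: "pmf J xy > 0" using that by (simp add: pmf_positive)
    have "pmf J xy = measure J {xy}" by (simp add: measure_pmf_single)
    also have "\<dots> \<le> measure J (snd -` {snd xy})"
      by (rule measure_pmf.finite_measure_mono) auto
    also have "\<dots> = pmf M (snd xy)" unfolding M_eq by (simp add: pmf_map)
    finally have "ln (pmf J xy / pmf M (snd xy)) \<le> 0"
      using J_pos by (simp add: divide_le_eq_1)
    then show ?thesis using J_pos by (simp add: mult_nonneg_nonpos)
  qed
  then show ?thesis
    unfolding cond_entropy_pmf_def Let_def J_def[symmetric] M_def[symmetric]
    by (simp add: sum_nonpos)
qed

lemma dual_total_corr_le_ln_card:
  assumes "finite A" and "set_pmf p \<subseteq> A"
  shows "dual_total_corr n p \<le> ln (card A)"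
proof -
  define q where "q = map_pmf (\<lambda>E. \<lambda>e\<in>vertex_pairs n. e \<in> E) p"
  have fin_p: "finite (set_pmf p)" using assms by (rule finite_subset[rotated])
  have fin_q: "finite (set_pmf q)" unfolding q_def using fin_p by simp
  have card_q_pos: "card (set_pmf q) > 0"
    using fin_q set_pmf_not_empty[of q] by (simp add: card_gt_0_iff)
  have "card (set_pmf q) \<le> card (set_pmf p)" unfolding q_def using fin_p by (simp add: card_image_le)
  also have "\<dots> \<le> card A" using assms by (rule card_mono)
  finally have card_q_le: "card (set_pmf q) \<le> card A" .
  have "dual_total_corr n p \<le> entropy_pmf q"
    unfolding dual_total_corr_def q_def[symmetric]
    by (simp add: sum_nonneg cond_entropy_pmf_nonneg)
  also have "\<dots> \<le> ln (card (set_pmf q))" using fin_q by (rule entropy_pmf_le_ln_card)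
  also have "\<dots> \<le> ln (card A)" using card_q_pos card_q_le by (intro ln_mono) simp_all
  finally show ?thesis .
qed

lemma finite_vertex_pairs: "finite (vertex_pairs n)"
  by (rule finite_subset[of _ "{1..n} \<times> {1..n}"]) (auto simp: vertex_pairs_def)

lemma finite_regular_graphs: "finite (regular_graphs n k)"
  using finite_vertex_pairs[of n] unfolding regular_graphs_def
  by (rule finite_subset[rotated, OF finite_Pow_iff[THEN iffD2]]) auto

lemma graph_eq_adj:
  assumes "E \<subseteq> vertex_pairs n"
  shows "E = {(i, j) \<in> vertex_pairs n. adj E i j}"
  using assms unfolding adj_def vertex_pairs_def by auto

lemma card_regular_graphs_le: "card (regular_graphs n k) \<le> (n choose k) ^ n"
proof -
  define nbhds where "nbhds E = (\<lambda>v\<in>{1..n}. {u \<in> {1..n}. adj E u v})" for E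
  define T where "T = (\<Pi>\<^sub>E v\<in>{1..n}. {S. S \<subseteq> {1..n} \<and> card S = k})"
  have "inj_on nbhds (regular_graphs n k)"
  proof (rule inj_onI)
    fix E E' assume E: "E \<in> regular_graphs n k" and E': "E' \<in> regular_graphs n k"
      and eq: "nbhds E = nbhds E'"
    have adj_iff: "adj E i j \<longleftrightarrow> adj E' i j" if "(i, j) \<in> vertex_pairs n" for i j
    proof -
      have "i \<in> nbhds E j \<longleftrightarrow> i \<in> nbhds E' j" by (simp only: eq)
      then show ?thesis using that unfolding nbhds_def vertex_pairs_def by simp
    qed
    have "E = {(i, j) \<in> vertex_pairs n. adj E i j}"
      using E unfolding regular_graphs_def by (intro graph_eq_adj) simp
    also have "\<dots> = {(i, j) \<in> vertex_pairs n. adj E' i j}"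
      using adj_iff by (intro Collect_cong) auto
    also have "\<dots> = E'"
      using E' unfolding regular_graphs_def by (intro graph_eq_adj[symmetric]) simp
    finally show "E = E'" .
  qed
  then have "card (regular_graphs n k) = card (nbhds ` regular_graphs n k)" by (simp add: card_image)
  also have "\<dots> \<le> card T"
  proof (rule card_mono)
    show "finite T" by (simp add: T_def finite_PiE)
    show "nbhds ` regular_graphs n k \<subseteq> T"
      unfolding T_def nbhds_def regular_graphs_def degree_def by auto
  qed
  also have "card T = (n choose k) ^ n" unfolding T_def by (simp add: card_PiE n_subsets)
  finally show ?thesis .
qed

lemma power_div_fact_le_exp:
  fixes x :: real
  assumes "x \<ge> 0"
  shows "x ^ k / fact k \<le> exp x"
proof -
  have "summable (\<lambda>n. x ^ n /\<^sub>R fact n)" and "exp x = (\<Sum>n. x ^ n /\<^sub>R fact n)"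
    using exp_converges[of x] by (auto simp: sums_iff)
  moreover have "sum (\<lambda>n. x ^ n /\<^sub>R fact n) {k} \<le> (\<Sum>n. x ^ n /\<^sub>R fact n)"
    using assms calculation(1) by (intro sum_le_suminf) auto
  ultimately show ?thesis by (simp add: divide_inverse mult.commute)
qed

lemma ln_binomial_le:
  assumes "1 \<le> k" and "k \<le> n"
  shows "ln (real (n choose k)) \<le> real k * (1 + ln (real n / real k))"
proof -
  have "real (n choose k) \<le> real n ^ k / fact k"
    using of_nat_mono[OF binomial_fact_pow[of n k]] by (simp add: field_simps)
  also have "\<dots> = (real n / real k) ^ k * (real k ^ k / fact k)"
    using assms by (simp add: field_simps power_divide)
  also have "\<dots> \<le> (real n / real k) ^ k * exp (real k)"
    by (intro mult_left_mono power_div_fact_le_exp) auto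
  finally have "ln (real (n choose k)) \<le> ln ((real n / real k) ^ k * exp (real k))"
    using assms by (intro ln_mono) auto
  also have "\<dots> = real k * (1 + ln (real n / real k))"
    using assms by (simp add: ln_mult ln_realpow algebra_simps)
  finally show ?thesis .
qed

lemma ln_card_regular_graphs_le:
  assumes "regular_graphs n k \<noteq> {}" and "1 \<le> k" and "k \<le> n"
  shows "ln (card (regular_graphs n k)) \<le> real k * real n * (1 + ln (real n / real k))"
proof -
  have "card (regular_graphs n k) > 0"
    using assms(1) finite_regular_graphs by (simp add: card_gt_0_iff)
  then have "ln (card (regular_graphs n k)) \<le> ln (real ((n choose k) ^ n))"
    using card_regular_graphs_le by (intro ln_mono) (simp_all only: of_nat_le_iff of_nat_0_less_iff)
  also have "\<dots> = real n * ln (real (n choose k))" by (simp add: ln_realpow)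
  also have "\<dots> \<le> real n * (real k * (1 + ln (real n / real k)))"
    using ln_binomial_le[OF assms(2,3)] by (rule mult_left_mono) simp
  finally show ?thesis by (simp add: algebra_simps)
qed

lemma le_div_ln_bounds:
  fixes n k :: real
  assumes "27 \<le> n" and "0 < k" and "k \<le> n / ln n"
  shows "k \<le> n" and "1 \<le> ln (n / k)"
proof -
  have "exp (3::real) = exp 1 ^ 3" using exp_of_nat_mult[of 3 "1::real"] by simp
  also have "\<dots> \<le> 3 ^ 3" by (rule power_mono[OF exp_le]) simp
  finally have "3 \<le> ln n" using assms(1) ln_mono[of "exp 3" n] by simp
  moreover have "ln n \<le> n / k" using assms \<open>3 \<le> ln n\<close> by (simp add: field_simps)
  ultimately have "exp 1 \<le> n / k" and "3 \<le> n / k" using exp_le by linarith+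
  then show "k \<le> n" and "1 \<le> ln (n / k)"
    using assms(2) ln_mono[of "exp 1" "n / k"] by (simp_all add: field_simps)
qed

theorem proposition3:
  shows "\<exists>C::real. C > 0 \<and> (\<exists>n0::nat. \<forall>n\<ge>n0. \<forall>k::nat.
           1 \<le> k \<and> real k \<le> real n / ln (real n) \<and> even (n * k) \<longrightarrow>
           (\<forall>p :: (nat \<times> nat) set pmf. set_pmf p \<subseteq> regular_graphs n k \<longrightarrow>
              dual_total_corr n p \<le> C * real k * real n * ln (real n / real k)))"
proof (intro exI[of _ "2::real"] exI[of _ "27::nat"] conjI allI impI)
  fix n k :: nat and p :: "(nat \<times> nat) set pmf"
  assume n: "27 \<le> n" and k: "1 \<le> k \<and> real k \<le> real n / ln (real n) \<and> even (n * k)"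
    and supp: "set_pmf p \<subseteq> regular_graphs n k"
  have hyps: "27 \<le> real n" "0 < real k" "real k \<le> real n / ln (real n)"
    using n k by simp_all
  have "real k \<le> real n" using hyps by (rule le_div_ln_bounds)
  have ratio: "1 \<le> ln (real n / real k)" using hyps by (rule le_div_ln_bounds)
  have "regular_graphs n k \<noteq> {}" using supp set_pmf_not_empty[of p] by blast
  have "dual_total_corr n p \<le> ln (card (regular_graphs n k))"
    using finite_regular_graphs supp by (rule dual_total_corr_le_ln_card)
  also have "\<dots> \<le> real k * real n * (1 + ln (real n / real k))"
    using \<open>regular_graphs n k \<noteq> {}\<close> k \<open>real k \<le> real n\<close>
    by (intro ln_card_regular_graphs_le) simp_all
  also have "\<dots> \<le> real k * real n * (2 * ln (real n / real k))"
    using ratio by (intro mult_left_mono) simp_all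
  finally show "dual_total_corr n p \<le> 2 * real k * real n * ln (real n / real k)"
    by (simp only: mult_ac)
qed simp

end
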